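(* Let $A \in \mathbb{R}^{m \times n}$ and $b \in \mathbb{R}^m$ be such that $\mathcal{P} = \{x \in \mathbb{R}^n : Ax \geq b\}$ is a polytope. Let $G$ be a finite undirected graph whose vertices are pairs $u = (I, X)$ with $I \subset [m]$ and $X \in \mathbb{R}^{n \times (1+m)}$. Suppose that $G$ is nonempty and that for every vertex $u = (I,X)$ of $G$: (i) $\#I = n$; (ii) $A_I X = \tilde b_I$; (iii) $A X \geq_{\mathrm{lex}} \tilde b$; (iv) $u$ has exactly $n$ neighbors in $G$; (v) for every neighbor $u' = (I', X')$ of $u$ in $G$, $\#(I \cap I') = n-1$. Then the vertex-edge graph $G_\mathrm{vert}$ of $\mathcal{P}$ equals the image of $G$ by the map $\varphi : (I,X) \mapsto$ (first column of $X$).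
   Context: Let $\tilde b := [\,b \;\; -\mathrm{Id}_m\,] \in \mathbb{R}^{m \times (1+m)}$. For row vectors $\alpha,\beta \in \mathbb{R}^{1+m}$, $\alpha \leq_{\mathrm{lex}} \beta$ means $\alpha = \beta$ or $\alpha_k < \beta_k$ at the first index $k$ where they differ; for matrices with $1+m$ columns, $X \geq_{\mathrm{lex}} Y$ means $X_i \geq_{\mathrm{lex}} Y_i$ for every row $i$. For $I \subset [m]$, $A_I$, $\tilde b_I$ are the submatrices of rows indexed by $I$. A face of $\mathcal{P}$ is a nonempty set of minimizers over $\mathcal{P}$ of some linear function $x \mapsto \langle c, x\rangle$; vertices and edges are faces of dimension 0 and 1; two vertices $v,w$ are adjacent if the segment $[v,w]$ is an edge. $G_\mathrm{vert}$ is the graph on the vertices of $\mathcal{P}$ with this adjacency. The image of a graph $(V,E)$ by $f$ is the graph with vertex set $f(V)$ and edges $\{(f(v),f(w)) : (v,w) \in E,\ f(v) \neq f(w)\}$. *)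

theory Defs
  imports "HOL-Analysis.Analysis"
begin

text \<open>Polyhedron {x. A x \<ge> b}; rows of A are A 0, ..., A (m-1) (0-based indexing of [m]).\<close>
definition polyh :: "nat \<Rightarrow> (nat \<Rightarrow> real^'n) \<Rightarrow> (nat \<Rightarrow> real) \<Rightarrow> (real^'n) set" where
  "polyh m A b = {x. \<forall>i<m. A i \<bullet> x \<ge> b i}"

definition is_face :: "(real^'n) set \<Rightarrow> (real^'n) set \<Rightarrow> bool" where
  "is_face P F \<longleftrightarrow> F \<noteq> {} \<and> (\<exists>c. F = {x \<in> P. \<forall>y\<in>P. c \<bullet> x \<le> c \<bullet> y})"

definition poly_vertices :: "(real^'n) set \<Rightarrow> (real^'n) set" where
  "poly_vertices P = {v. \<exists>F. is_face P F \<and> aff_dim F = 0 \<and> F = {v}}"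

definition poly_adjacent :: "(real^'n) set \<Rightarrow> real^'n \<Rightarrow> real^'n \<Rightarrow> bool" where
  "poly_adjacent P v w \<longleftrightarrow> v \<in> poly_vertices P \<and> w \<in> poly_vertices P \<and>
     is_face P (closed_segment v w) \<and> aff_dim (closed_segment v w) = 1"

definition G_vert :: "(real^'n) set \<Rightarrow> (real^'n) set \<times> ((real^'n) \<times> (real^'n)) set" where
  "G_vert P = (poly_vertices P, {(v,w). poly_adjacent P v w})"

definition fin_undirected_graph :: "'v set \<Rightarrow> ('v \<times> 'v) set \<Rightarrow> bool" where
  "fin_undirected_graph V E \<longleftrightarrow> finite V \<and> E \<subseteq> V \<times> V \<and> sym E \<and> irrefl E"

definition graph_image :: "('v \<Rightarrow> 'w) \<Rightarrow> 'v set \<Rightarrow> ('v \<times> 'v) set \<Rightarrow> 'w set \<times> ('w \<times> 'w) set" where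
  "graph_image f V E = (f ` V, {(f v, f w) | v w. (v, w) \<in> E \<and> f v \<noteq> f w})"

definition lex_le :: "real list \<Rightarrow> real list \<Rightarrow> bool" where
  "lex_le \<alpha> \<beta> \<longleftrightarrow> length \<alpha> = length \<beta> \<and>
     (\<alpha> = \<beta> \<or> (\<exists>k < length \<alpha>. take k \<alpha> = take k \<beta> \<and> \<alpha> ! k < \<beta> ! k))"

text \<open>Row i of btilde = [b | -Id_m], of length 1+m.\<close>
definition btilde_row :: "nat \<Rightarrow> (nat \<Rightarrow> real) \<Rightarrow> nat \<Rightarrow> real list" where
  "btilde_row m b i = b i # map (\<lambda>j. if j = i then -1 else 0) [0..<m]"

text \<open>A matrix X in R^(n x (1+m)) is the list of its 1+m columns; row i of A X.\<close>
definition AX_row :: "(nat \<Rightarrow> real^'n) \<Rightarrow> (real^'n) list \<Rightarrow> nat \<Rightarrow> real list" where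
  "AX_row A X i = map (\<lambda>c. A i \<bullet> c) X"

end

theory Submission
  imports Defs
begin

text \<open>
  Read a node \<open>(I, X)\<close> as a basis \<open>I\<close> of the perturbed system
  \<open>A x \<ge> b - (\<epsilon>, \<epsilon>\<^sup>2, \<dots>, \<epsilon>\<^sup>m)\<close> with basic solution \<open>x(\<epsilon>) = X\<^sub>0 + \<Sigma>\<^sub>j \<epsilon>\<^sup>j X\<^sub>j\<close>,
  which by (iii) is feasible for all small \<open>\<epsilon> > 0\<close>; its unperturbed part \<open>X\<^sub>0\<close> is then a
  vertex of \<open>P\<close>.  For \<open>k \<in> I\<close>, \<open>-X\<^sub>k\<^sub>+\<^sub>1\<close> is the direction of the edge obtained by relaxing
  constraint \<open>k\<close>, and a neighbour \<open>(I', X')\<close> with \<open>I \<inter> I' = I - {k}\<close> lies on it.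
  Lexicographic feasibility of \<open>X'\<close> forces the step length to be given by the lexicographic
  ratio test, so each leaving index \<open>k\<close> has at most one neighbour, and the degree condition
  makes all \<open>n\<close> of them present.  Hence lexicographic pivoting never leaves \<open>G\<close>:
  lexicographically minimising an objective over the nodes reaches a basis with nonnegative
  reduced costs, which yields every vertex of \<open>P\<close>; and among the bases of a vertex \<open>v\<close>
  minimising the objective of an edge \<open>[v, w]\<close>, breaking ties by an objective separating
  \<open>w\<close> from \<open>v\<close> forces a pivot from \<open>v\<close> to \<open>w\<close>.
\<close>

section \<open>Lexicographic sign of finite sequences\<close>

definition lex_pos :: "nat \<Rightarrow> (nat \<Rightarrow> real) \<Rightarrow> bool" where
  "lex_pos N h \<longleftrightarrow> (\<exists>k<N. (\<forall>j<k. h j = 0) \<and> h k > 0)"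

definition lex_nonneg :: "nat \<Rightarrow> (nat \<Rightarrow> real) \<Rightarrow> bool" where
  "lex_nonneg N h \<longleftrightarrow> (\<forall>j<N. h j = 0) \<or> lex_pos N h"

lemma lex_pos_cong:
  assumes "lex_pos N h" "\<And>j. j < N \<Longrightarrow> h j = g j"
  shows "lex_pos N g"
proof -
  obtain k where "k < N" "\<forall>j<k. h j = 0" "h k > 0"
    using assms(1) unfolding lex_pos_def by blast
  then show ?thesis unfolding lex_pos_def using assms(2) by (intro exI[of _ k]) auto
qed

lemma lex_nonneg_cong:
  "lex_nonneg N h \<Longrightarrow> (\<And>j. j < N \<Longrightarrow> h j = g j) \<Longrightarrow> lex_nonneg N g"
  using lex_pos_cong[of N h g] unfolding lex_nonneg_def by auto

lemma lex_pos_add: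
  assumes f: "lex_pos N f" and g: "lex_nonneg N g"
  shows "lex_pos N (\<lambda>j. f j + g j)"
proof -
  obtain k where k: "k < N" "\<forall>j<k. f j = 0" "f k > 0"
    using f unfolding lex_pos_def by blast
  show ?thesis
  proof (cases "\<forall>j<N. g j = 0")
    case True
    then show ?thesis unfolding lex_pos_def using k by (intro exI[of _ k]) auto
  next
    case False
    then obtain k' where k': "k' < N" "\<forall>j<k'. g j = 0" "g k' > 0"
      using g unfolding lex_nonneg_def lex_pos_def by blast
    show ?thesis unfolding lex_pos_def
    proof (cases "k \<le> k'")
      case True
      then show "\<exists>k<N. (\<forall>j<k. f j + g j = 0) \<and> f k + g k > 0"
        using k k' by (intro exI[of _ k]) (auto, metis add_pos_nonneg le_less)
    next
      case False
      then show "\<exists>k<N. (\<forall>j<k. f j + g j = 0) \<and> f k + g k > 0"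
        using k k' by (intro exI[of _ k']) auto
    qed
  qed
qed

lemma lex_nonneg_add:
  assumes "lex_nonneg N f" "lex_nonneg N g"
  shows "lex_nonneg N (\<lambda>j. f j + g j)"
proof (cases "\<forall>j<N. f j = 0")
  case True
  then show ?thesis using lex_nonneg_cong[OF assms(2), of "\<lambda>j. f j + g j"] by simp
next
  case False
  then have "lex_pos N f" using assms(1) unfolding lex_nonneg_def by blast
  then show ?thesis using lex_pos_add assms(2) unfolding lex_nonneg_def by blast
qed

lemma lex_pos_mult: "a > 0 \<Longrightarrow> lex_pos N h \<Longrightarrow> lex_pos N (\<lambda>j. a * h j)"
  unfolding lex_pos_def by auto

lemma lex_nonneg_mult: "a \<ge> 0 \<Longrightarrow> lex_nonneg N h \<Longrightarrow> lex_nonneg N (\<lambda>j. a * h j)"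
  using lex_pos_mult[of a N h] unfolding lex_nonneg_def by (cases "a = 0") auto

lemma lex_pos_imp_not_lex_nonneg_uminus:
  assumes "lex_pos N h"
  shows "\<not> lex_nonneg N (\<lambda>j. - h j)"
proof
  assume neg: "lex_nonneg N (\<lambda>j. - h j)"
  obtain k where k: "k < N" "\<forall>j<k. h j = 0" "h k > 0"
    using assms unfolding lex_pos_def by blast
  then have "\<not> (\<forall>j<N. - h j = 0)" by auto
  then obtain k' where k': "k' < N" "\<forall>j<k'. h j = 0" "h k' < 0"
    using neg unfolding lex_nonneg_def lex_pos_def by auto
  show False using k k' by (cases k k' rule: linorder_cases) auto
qed

lemma lex_pos_mult_neg: "a < 0 \<Longrightarrow> lex_pos N h \<Longrightarrow> \<not> lex_nonneg N (\<lambda>j. h j * a)"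
  using lex_pos_imp_not_lex_nonneg_uminus[OF lex_pos_mult[of "- a" N h]] by (simp add: mult.commute)

lemma lex_nonneg_total: "lex_nonneg N h \<or> lex_nonneg N (\<lambda>j. - h j)"
proof (cases "\<forall>j<N. h j = 0")
  case True
  then show ?thesis unfolding lex_nonneg_def by auto
next
  case False
  define k where "k = (LEAST k. k < N \<and> h k \<noteq> 0)"
  have k: "k < N" "h k \<noteq> 0"
    using False LeastI_ex[of "\<lambda>k. k < N \<and> h k \<noteq> 0"] unfolding k_def by auto
  have "\<forall>j<k. h j = 0"
    using not_less_Least[of _ "\<lambda>k. k < N \<and> h k \<noteq> 0"] k(1) unfolding k_def
    by (meson order.strict_trans)
  then show ?thesis unfolding lex_nonneg_def lex_pos_def using k
    by (cases "h k > 0") (auto intro!: exI[of _ k])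
qed

lemma lex_nonneg_antisym:
  "lex_nonneg N h \<Longrightarrow> lex_nonneg N (\<lambda>j. - h j) \<Longrightarrow> \<forall>j<N. h j = 0"
  using lex_pos_imp_not_lex_nonneg_uminus unfolding lex_nonneg_def by blast

lemma lex_pos_first_nonneg: "lex_pos N h \<Longrightarrow> h 0 \<ge> 0"
  unfolding lex_pos_def by (metis less_eq_real_def neq0_conv)

lemma lex_nonneg_first_nonneg: "lex_nonneg N h \<Longrightarrow> 0 < N \<Longrightarrow> h 0 \<ge> 0"
  using lex_pos_first_nonneg unfolding lex_nonneg_def by fastforce

lemma ex_lex_min:
  fixes key :: "'a \<Rightarrow> nat \<Rightarrow> real"
  assumes "finite S" "S \<noteq> {}"
  shows "\<exists>x\<in>S. \<forall>y\<in>S. lex_nonneg N (\<lambda>j. key y j - key x j)"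
  using assms
proof (induction S rule: finite_ne_induct)
  case (singleton x)
  then show ?case unfolding lex_nonneg_def by auto
next
  case (insert a S)
  then obtain x where x: "x \<in> S" "\<forall>y\<in>S. lex_nonneg N (\<lambda>j. key y j - key x j)" by blast
  show ?case
  proof (cases "lex_nonneg N (\<lambda>j. key a j - key x j)")
    case True
    then show ?thesis using x by auto
  next
    case False
    then have xa: "lex_nonneg N (\<lambda>j. key x j - key a j)"
      using lex_nonneg_total[of N "\<lambda>j. key a j - key x j"] by simp
    have "lex_nonneg N (\<lambda>j. key y j - key a j)" if "y \<in> insert a S" for y
    proof (cases "y = a")
      case True
      then show ?thesis unfolding lex_nonneg_def by auto
    next
      case False
      then have "y \<in> S" using that by simp
      then have "lex_nonneg N (\<lambda>j. (key y j - key x j) + (key x j - key a j))"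
        using lex_nonneg_add x(2) xa by blast
      then show ?thesis by simp
    qed
    then show ?thesis by blast
  qed
qed

lemma lex_le_imp_lex_nonneg:
  assumes "lex_le \<alpha> \<beta>"
  shows "lex_nonneg (length \<alpha>) (\<lambda>j. \<beta> ! j - \<alpha> ! j)"
proof (cases "\<alpha> = \<beta>")
  case True
  then show ?thesis unfolding lex_nonneg_def by simp
next
  case False
  then obtain k where k: "k < length \<alpha>" "take k \<alpha> = take k \<beta>" "\<alpha> ! k < \<beta> ! k"
    using assms unfolding lex_le_def by blast
  have "\<forall>j<k. \<beta> ! j - \<alpha> ! j = 0" using k(2) by (metis nth_take diff_self)
  then show ?thesis unfolding lex_nonneg_def lex_pos_def using k(1,3) by auto
qed

lemma lex_decrease_along_dir:
  fixes d c :: "'a::real_inner"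
  assumes "lex_pos N \<theta>" "c \<bullet> d < 0" "\<And>j. j < N \<Longrightarrow> X' ! j = X ! j + \<theta> j *\<^sub>R d"
  shows "\<not> lex_nonneg N (\<lambda>j. c \<bullet> X' ! j - c \<bullet> X ! j)"
proof
  assume "lex_nonneg N (\<lambda>j. c \<bullet> X' ! j - c \<bullet> X ! j)"
  then have "lex_nonneg N (\<lambda>j. \<theta> j * (c \<bullet> d))"
    by (rule lex_nonneg_cong) (simp add: assms(3) inner_add_right)
  then show False using lex_pos_mult_neg[OF assms(2,1)] by simp
qed

section \<open>Faces of polyhedra\<close>

lemma mem_polyh: "x \<in> polyh m A b \<longleftrightarrow> (\<forall>i<m. A i \<bullet> x \<ge> b i)"
  by (simp add: polyh_def)

lemma convex_tight_set: "convex {x \<in> polyh m A b. \<forall>j\<in>J. A j \<bullet> x = b j}"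
proof -
  have "{x \<in> polyh m A b. \<forall>j\<in>J. A j \<bullet> x = b j} =
      (\<Inter>i\<in>{..<m}. {x. A i \<bullet> x \<ge> b i}) \<inter> (\<Inter>j\<in>J. {x. A j \<bullet> x = b j})"
    by (auto simp: mem_polyh)
  then show ?thesis
    by (simp add: convex_Int convex_INT convex_halfspace_ge convex_hyperplane)
qed

lemma is_face_tight_set:
  assumes J: "finite J" "J \<subseteq> {..<m}" and x0: "x0 \<in> polyh m A b" "\<forall>j\<in>J. A j \<bullet> x0 = b j"
  shows "is_face (polyh m A b) {x \<in> polyh m A b. \<forall>j\<in>J. A j \<bullet> x = b j}"
proof -
  let ?P = "polyh m A b" and ?c = "\<Sum>j\<in>J. A j"
  have inner_c: "?c \<bullet> x - (\<Sum>j\<in>J. b j) = (\<Sum>j\<in>J. A j \<bullet> x - b j)" for x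
    by (simp add: inner_sum_left sum_subtractf)
  have slack: "A j \<bullet> x - b j \<ge> 0" if "x \<in> ?P" "j \<in> J" for x j
    using that J(2) by (auto simp: mem_polyh)
  have c_x0: "?c \<bullet> x0 = (\<Sum>j\<in>J. b j)"
    using inner_c[of x0] x0(2) by simp
  have "(\<forall>y\<in>?P. ?c \<bullet> x \<le> ?c \<bullet> y) \<longleftrightarrow> (\<forall>j\<in>J. A j \<bullet> x - b j = 0)" if x: "x \<in> ?P" for x
  proof
    assume "\<forall>y\<in>?P. ?c \<bullet> x \<le> ?c \<bullet> y"
    then have "(\<Sum>j\<in>J. A j \<bullet> x - b j) \<le> 0"
      using x0(1) c_x0 inner_c[of x] by fastforce
    moreover have "(\<Sum>j\<in>J. A j \<bullet> x - b j) \<ge> 0"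
      using slack[OF x] by (simp add: sum_nonneg)
    ultimately have "(\<Sum>j\<in>J. A j \<bullet> x - b j) = 0" by simp
    then show "\<forall>j\<in>J. A j \<bullet> x - b j = 0"
      using sum_nonneg_eq_0_iff[OF J(1), of "\<lambda>j. A j \<bullet> x - b j"] slack[OF x] by simp
  next
    assume "\<forall>j\<in>J. A j \<bullet> x - b j = 0"
    then have "?c \<bullet> x - (\<Sum>j\<in>J. b j) = 0" using inner_c[of x] by simp
    moreover have "?c \<bullet> y - (\<Sum>j\<in>J. b j) \<ge> 0" if "y \<in> ?P" for y
      using inner_c[of y] slack[OF that] by (simp add: sum_nonneg)
    ultimately show "\<forall>y\<in>?P. ?c \<bullet> x \<le> ?c \<bullet> y" by fastforce
  qed
  then have "{x \<in> ?P. \<forall>j\<in>J. A j \<bullet> x = b j} = {x \<in> ?P. \<forall>y\<in>?P. ?c \<bullet> x \<le> ?c \<bullet> y}"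
    by auto
  then show ?thesis unfolding is_face_def using x0 by blast
qed

lemma vertex_unique_minimizer:
  "v \<in> poly_vertices P \<Longrightarrow> \<exists>c. {v} = {x \<in> P. \<forall>y\<in>P. c \<bullet> x \<le> c \<bullet> y}"
  unfolding poly_vertices_def is_face_def by blast

lemma vertex_strictly_separates:
  assumes "w \<in> poly_vertices P" "v \<in> P" "v \<noteq> w"
  shows "\<exists>c. c \<bullet> w < c \<bullet> v"
proof -
  obtain c where c: "{w} = {x \<in> P. \<forall>y\<in>P. c \<bullet> x \<le> c \<bullet> y}"
    using vertex_unique_minimizer[OF assms(1)] by blast
  then have "v \<notin> {x \<in> P. \<forall>y\<in>P. c \<bullet> x \<le> c \<bullet> y}" using assms(3) by blast
  then obtain y where "y \<in> P" "c \<bullet> y < c \<bullet> v" using assms(2) by (auto simp: not_le)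
  moreover have "c \<bullet> w \<le> c \<bullet> y" using c calculation(1) by blast
  ultimately show ?thesis by (intro exI[of _ c]) linarith
qed

lemma vertex_in_closed_segment:
  assumes x: "x \<in> poly_vertices P" and vw: "v \<in> P" "w \<in> P" and "x \<in> closed_segment v w"
  shows "x = v \<or> x = w"
proof -
  obtain c where c: "{x} = {z \<in> P. \<forall>y\<in>P. c \<bullet> z \<le> c \<bullet> y}"
    using vertex_unique_minimizer[OF x] by blast
  obtain u where u: "0 \<le> u" "u \<le> 1" "x = (1 - u) *\<^sub>R v + u *\<^sub>R w"
    using assms(4) unfolding closed_segment_def by blast
  have cx: "c \<bullet> x = (1 - u) * (c \<bullet> v) + u * (c \<bullet> w)" using u(3) by (simp add: inner_add_right)
  have xmin: "\<forall>y\<in>P. c \<bullet> x \<le> c \<bullet> y" using c by blast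
  show ?thesis
  proof (cases "u = 1")
    case True
    then show ?thesis using u by simp
  next
    case False
    have "u * (c \<bullet> x) \<le> u * (c \<bullet> w)" using xmin vw u(1) by (intro mult_left_mono) auto
    moreover have "(1 - u) * (c \<bullet> v) = c \<bullet> x - u * (c \<bullet> w)" using cx by simp
    moreover have "(1 - u) * (c \<bullet> x) = c \<bullet> x - u * (c \<bullet> x)" by (simp add: algebra_simps)
    ultimately have "(1 - u) * (c \<bullet> v) \<le> (1 - u) * (c \<bullet> x)" by linarith
    then have "c \<bullet> v \<le> c \<bullet> x" using False u(2) by (simp add: mult_le_cancel_left)
    then have "\<forall>y\<in>P. c \<bullet> v \<le> c \<bullet> y" using xmin by (meson order_trans)
    then have "v \<in> {x}" using c vw(1) by blast
    then show ?thesis by simp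
  qed
qed

lemma adjacent_segment_minimizers:
  assumes "poly_adjacent P v w"
  obtains c where "closed_segment v w = {x \<in> P. \<forall>y\<in>P. c \<bullet> x \<le> c \<bullet> y}"
    "v \<in> P" "\<forall>y\<in>P. c \<bullet> v \<le> c \<bullet> y" "w \<in> P" "c \<bullet> w = c \<bullet> v"
proof -
  obtain c where seg: "closed_segment v w = {x \<in> P. \<forall>y\<in>P. c \<bullet> x \<le> c \<bullet> y}"
    using assms unfolding poly_adjacent_def is_face_def by blast
  have v: "v \<in> P" "\<forall>y\<in>P. c \<bullet> v \<le> c \<bullet> y" using seg ends_in_segment(1)[of v w] by blast+
  have w: "w \<in> P" "\<forall>y\<in>P. c \<bullet> w \<le> c \<bullet> y" using seg ends_in_segment(2)[of w v] by blast+
  have "c \<bullet> v \<le> c \<bullet> w" "c \<bullet> w \<le> c \<bullet> v" using v w by auto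
  then have "c \<bullet> w = c \<bullet> v" by linarith
  with seg v w(1) show thesis by (rule that)
qed

lemma aff_dim_closed_segment: "v \<noteq> w \<Longrightarrow> aff_dim (closed_segment v w) = 1"
  by (simp add: segment_convex_hull aff_dim_convex_hull aff_dim_2)

section \<open>Lexicographically feasible bases\<close>

lemma btilde_row_nth_0 [simp]: "btilde_row m b i ! 0 = b i"
  by (simp add: btilde_row_def)

lemma btilde_row_nth_Suc [simp]:
  "j < m \<Longrightarrow> btilde_row m b i ! Suc j = (if j = i then -1 else 0)"
  by (simp add: btilde_row_def)

lemma length_btilde_row [simp]: "length (btilde_row m b i) = Suc m"
  by (simp add: btilde_row_def)

lemma AX_row_nth [simp]: "j < length X \<Longrightarrow> AX_row A X i ! j = A i \<bullet> X ! j"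
  by (simp add: AX_row_def)

definition edge_dir :: "('a::real_vector) list \<Rightarrow> nat \<Rightarrow> 'a" where
  "edge_dir X k = - X ! Suc k"

locale lex_feasible_bases =
  fixes m :: nat and A :: "nat \<Rightarrow> real^'n::finite" and b :: "nat \<Rightarrow> real"
    and V :: "(nat set \<times> (real^'n) list) set"
  assumes basis_subset: "(I, X) \<in> V \<Longrightarrow> I \<subseteq> {..<m}"
    and length_cols: "(I, X) \<in> V \<Longrightarrow> length X = Suc m"
    and card_basis: "(I, X) \<in> V \<Longrightarrow> card I = CARD('n)"
    and basis_tight: "(I, X) \<in> V \<Longrightarrow> i \<in> I \<Longrightarrow> AX_row A X i = btilde_row m b i"
    and lex_feasible: "(I, X) \<in> V \<Longrightarrow> i < m \<Longrightarrow> lex_le (btilde_row m b i) (AX_row A X i)"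
begin

abbreviation "P \<equiv> polyh m A b"

lemma finite_basis: "(I, X) \<in> V \<Longrightarrow> finite I"
  by (intro card_ge_0_finite) (simp add: card_basis)

lemma tight_col:
  assumes "(I, X) \<in> V" "i \<in> I" "j < Suc m"
  shows "A i \<bullet> X ! j = btilde_row m b i ! j"
  using basis_tight[OF assms(1,2)] AX_row_nth[of j X A i] length_cols[OF assms(1)] assms(3)
  by simp

lemma tight_col0: "(I, X) \<in> V \<Longrightarrow> i \<in> I \<Longrightarrow> A i \<bullet> X ! 0 = b i"
  using tight_col[of I X i 0] by simp

lemma inner_edge_dir:
  assumes "(I, X) \<in> V" "i \<in> I" "k \<in> I"
  shows "A i \<bullet> edge_dir X k = (if i = k then 1 else 0)"
  using tight_col[OF assms(1,2), of "Suc k"] basis_subset[OF assms(1)] assms(3)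
  by (auto simp: edge_dir_def)

lemma lex_slack_nonneg:
  assumes "(I, X) \<in> V" "i < m"
  shows "lex_nonneg (Suc m) (\<lambda>j. A i \<bullet> X ! j - btilde_row m b i ! j)"
proof -
  have "lex_nonneg (Suc m) (\<lambda>j. AX_row A X i ! j - btilde_row m b i ! j)"
    using lex_le_imp_lex_nonneg[OF lex_feasible[OF assms]] by simp
  then show ?thesis
    by (rule lex_nonneg_cong) (simp add: length_cols[OF assms(1)])
qed

lemma col0_in_polyh: "(I, X) \<in> V \<Longrightarrow> X ! 0 \<in> P"
  using lex_nonneg_first_nonneg[OF lex_slack_nonneg] by (simp add: mem_polyh)

lemma inj_on_rows:
  assumes V: "(I, X) \<in> V"
  shows "inj_on A I"
proof (rule inj_onI)
  fix i k assume ik: "i \<in> I" "k \<in> I" "A i = A k"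
  then have "A i \<bullet> edge_dir X k = A k \<bullet> edge_dir X k" by simp
  then show "i = k" using inner_edge_dir[OF V ik(1,2)] inner_edge_dir[OF V ik(2,2)]
    by (simp split: if_split_asm)
qed

lemma span_rows: "(I, X) \<in> V \<Longrightarrow> span (A ` I) = UNIV"
proof -
  assume V: "(I, X) \<in> V"
  have card: "card (A ` I) = CARD('n)"
    using card_image[OF inj_on_rows[OF V]] card_basis[OF V] by simp
  have "independent (A ` I)"
  proof
    assume "dependent (A ` I)"
    then obtain u where u: "\<exists>v\<in>A ` I. u v \<noteq> 0" "(\<Sum>v\<in>A ` I. u v *\<^sub>R v) = 0"
      using real_vector.dependent_finite[of "A ` I"] finite_basis[OF V] by auto
    obtain k where k: "k \<in> I" "u (A k) \<noteq> 0" using u(1) by blast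
    have "0 = (\<Sum>i\<in>I. u (A i) *\<^sub>R A i) \<bullet> edge_dir X k"
      using u(2) sum.reindex[OF inj_on_rows[OF V], of "\<lambda>v. u v *\<^sub>R v"] by simp
    also have "\<dots> = u (A k)"
      using k(1) finite_basis[OF V]
      by (simp add: inner_sum_left inner_edge_dir[OF V] if_distrib sum.delta cong: if_cong)
    finally show False using k(2) by simp
  qed
  then have "UNIV \<subseteq> span (A ` I)"
    using eucl.card_eq_dim[of "A ` I" UNIV] card finite_basis[OF V] by simp
  then show ?thesis by auto
qed

lemma inner_eq_sum_reduced_costs:
  assumes V: "(I, X) \<in> V"
  shows "c \<bullet> y = (\<Sum>k\<in>I. (c \<bullet> edge_dir X k) * (A k \<bullet> y))"
proof -
  have "c \<in> span (A ` I)" using span_rows[OF V] by simp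
  then obtain u where "c = (\<Sum>v\<in>A ` I. u v *\<^sub>R v)"
    using real_vector.span_finite[of "A ` I"] finite_basis[OF V] by auto
  then have c: "c = (\<Sum>i\<in>I. u (A i) *\<^sub>R A i)"
    using sum.reindex[OF inj_on_rows[OF V], of "\<lambda>v. u v *\<^sub>R v"] by simp
  have "c \<bullet> edge_dir X k = u (A k)" if "k \<in> I" for k
    using that finite_basis[OF V] unfolding c
    by (simp add: inner_sum_left inner_edge_dir[OF V] if_distrib sum.delta cong: if_cong)
  then show ?thesis unfolding c by (simp add: inner_sum_left)
qed

lemma eq_0_if_rows_orthogonal:
  assumes V: "(I, X) \<in> V" and y: "\<forall>k\<in>I. A k \<bullet> y = 0"
  shows "y = 0"
proof -
  have "y \<bullet> y = (\<Sum>k\<in>I. (y \<bullet> edge_dir X k) * (A k \<bullet> y))"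
    by (rule inner_eq_sum_reduced_costs[OF V])
  also have "\<dots> = 0" using y by simp
  finally show ?thesis by simp
qed

lemma eq_edge_dir_if_rows_orthogonal:
  assumes V: "(I, X) \<in> V" and k: "k \<in> I" and y: "\<forall>i\<in>I - {k}. A i \<bullet> y = 0"
  shows "y = (A k \<bullet> y) *\<^sub>R edge_dir X k"
proof -
  have "\<forall>i\<in>I. A i \<bullet> (y - (A k \<bullet> y) *\<^sub>R edge_dir X k) = 0"
    using y inner_edge_dir[OF V _ k] by (auto simp: inner_diff_right)
  then have "y - (A k \<bullet> y) *\<^sub>R edge_dir X k = 0" by (rule eq_0_if_rows_orthogonal[OF V])
  then show ?thesis by simp
qed

lemma col_Suc_eq_0:
  assumes V: "(I, X) \<in> V" and l: "l < m" "l \<notin> I"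
  shows "X ! Suc l = 0"
proof (rule eq_0_if_rows_orthogonal[OF V], intro ballI)
  fix i assume "i \<in> I"
  then show "A i \<bullet> X ! Suc l = 0" using tight_col[OF V, of i "Suc l"] l by auto
qed

lemma basis_unique:
  assumes "(I, X) \<in> V" "(I', X) \<in> V"
  shows "I = I'"
proof -
  have "I \<subseteq> I'" if V: "(I, X) \<in> V" "(I', X) \<in> V" for I I'
  proof
    fix i assume i: "i \<in> I"
    have "A i \<bullet> edge_dir X i = 1" using inner_edge_dir[OF V(1) i i] by simp
    show "i \<in> I'"
    proof (rule ccontr)
      assume "i \<notin> I'"
      then have "X ! Suc i = 0" using col_Suc_eq_0[OF V(2)] basis_subset[OF V(1)] i by auto
      then show False using \<open>A i \<bullet> edge_dir X i = 1\<close> by (simp add: edge_dir_def)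
    qed
  qed
  then show ?thesis using assms by blast
qed

lemma col0_minimizes:
  assumes V: "(I, X) \<in> V" and "\<forall>k\<in>I. c \<bullet> edge_dir X k \<ge> 0" "y \<in> P"
  shows "c \<bullet> X ! 0 \<le> c \<bullet> y"
proof -
  have "c \<bullet> X ! 0 = (\<Sum>k\<in>I. (c \<bullet> edge_dir X k) * (A k \<bullet> X ! 0))"
    by (rule inner_eq_sum_reduced_costs[OF V])
  also have "\<dots> \<le> (\<Sum>k\<in>I. (c \<bullet> edge_dir X k) * (A k \<bullet> y))"
    using assms basis_subset[OF V] tight_col0[OF V]
    by (intro sum_mono mult_left_mono) (auto simp: mem_polyh)
  also have "\<dots> = c \<bullet> y"
    by (rule inner_eq_sum_reduced_costs[OF V, symmetric])
  finally show ?thesis .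
qed

lemma col0_is_vertex:
  assumes V: "(I, X) \<in> V"
  shows "X ! 0 \<in> poly_vertices P"
proof -
  have "x - X ! 0 = 0" if "\<forall>i\<in>I. A i \<bullet> x = b i" for x
    by (rule eq_0_if_rows_orthogonal[OF V]) (simp add: that tight_col0[OF V] inner_diff_right)
  then have "{x \<in> P. \<forall>i\<in>I. A i \<bullet> x = b i} = {X ! 0}"
    using col0_in_polyh[OF V] tight_col0[OF V] by auto
  moreover have "is_face P {x \<in> P. \<forall>i\<in>I. A i \<bullet> x = b i}"
    using finite_basis[OF V] basis_subset[OF V] col0_in_polyh[OF V] tight_col0[OF V]
    by (intro is_face_tight_set) auto
  ultimately show ?thesis unfolding poly_vertices_def by auto
qed

lemma ex_tied_reduced_cost:
  assumes V: "(I, X) \<in> V" and nonneg: "\<forall>k\<in>I. c \<bullet> edge_dir X k \<ge> 0"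
    and w: "w \<in> P" "c \<bullet> w = c \<bullet> X ! 0" "c' \<bullet> w < c' \<bullet> X ! 0"
  shows "\<exists>k\<in>I. c \<bullet> edge_dir X k = 0 \<and> c' \<bullet> edge_dir X k < 0"
proof (rule ccontr)
  assume none: "\<not> ?thesis"
  let ?s = "\<lambda>k. A k \<bullet> w - b k"
  have s: "?s k \<ge> 0" if "k \<in> I" for k
    using w(1) that basis_subset[OF V] by (auto simp: mem_polyh)
  have diff: "e \<bullet> w - e \<bullet> X ! 0 = (\<Sum>k\<in>I. (e \<bullet> edge_dir X k) * ?s k)" for e
  proof -
    have "e \<bullet> w = (\<Sum>k\<in>I. (e \<bullet> edge_dir X k) * (A k \<bullet> w))"
      by (rule inner_eq_sum_reduced_costs[OF V])
    moreover have "e \<bullet> X ! 0 = (\<Sum>k\<in>I. (e \<bullet> edge_dir X k) * b k)"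
      unfolding inner_eq_sum_reduced_costs[OF V, of e "X ! 0"]
      using tight_col0[OF V] by (intro sum.cong) auto
    ultimately show ?thesis by (simp add: sum_subtractf right_diff_distrib)
  qed
  have "(\<Sum>k\<in>I. (c \<bullet> edge_dir X k) * ?s k) = 0" using diff[of c] w(2) by simp
  moreover have "(c \<bullet> edge_dir X k) * ?s k \<ge> 0" if "k \<in> I" for k
    using nonneg s[OF that] that by simp
  ultimately have tight: "\<forall>k\<in>I. (c \<bullet> edge_dir X k) * ?s k = 0"
    using sum_nonneg_eq_0_iff[OF finite_basis[OF V], of "\<lambda>k. (c \<bullet> edge_dir X k) * ?s k"]
    by simp
  have "(\<Sum>k\<in>I. (c' \<bullet> edge_dir X k) * ?s k) \<ge> 0"
  proof (intro sum_nonneg)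
    fix k assume k: "k \<in> I"
    show "(c' \<bullet> edge_dir X k) * ?s k \<ge> 0"
    proof (cases "c \<bullet> edge_dir X k = 0")
      case True
      then show ?thesis using none k s[OF k] by (simp add: not_less)
    next
      case False
      then have "?s k = 0" using tight k by auto
      then show ?thesis by simp
    qed
  qed
  then show False using diff[of c'] w(3) by simp
qed

lemma exchange_Int_eq:
  assumes V: "(I, X) \<in> V" and k: "k \<in> I" "k \<notin> I'"
    and card: "card (I \<inter> I') = CARD('n) - 1"
  shows "I \<inter> I' = I - {k}"
proof -
  have "card (I - {k}) = CARD('n) - 1"
    using card_basis[OF V] finite_basis[OF V] k(1) by simp
  then show ?thesis
    using card_subset_eq[of "I - {k}" "I \<inter> I'"] finite_basis[OF V] card k(2) by auto
qed

lemma ex_entering: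
  assumes V: "(I, X) \<in> V" "(I', X') \<in> V" and card: "card (I \<inter> I') = CARD('n) - 1"
  shows "\<exists>l\<in>I'. l \<notin> I"
proof (rule ccontr)
  assume "\<not> ?thesis"
  then have "I \<inter> I' = I'" by blast
  moreover have "CARD('n) > 0" by simp
  ultimately show False
    using card card_basis[OF V(2)] by (metis diff_less less_irrefl zero_less_one)
qed

lemma pivot_step_lex_pos:
  assumes V: "(I, X) \<in> V" "(I', X') \<in> V" and k: "k \<in> I" "k \<notin> I'"
    and Int: "I \<inter> I' = I - {k}"
  obtains \<theta> where "lex_pos (Suc m) \<theta>"
    "\<And>j. j < Suc m \<Longrightarrow> X' ! j = X ! j + \<theta> j *\<^sub>R edge_dir X k"
proof -
  define \<theta> where "\<theta> j = A k \<bullet> X' ! j - btilde_row m b k ! j" for j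
  have km: "k < m" using basis_subset[OF V(1)] k(1) by auto
  have cols: "X' ! j = X ! j + \<theta> j *\<^sub>R edge_dir X k" if j: "j < Suc m" for j
  proof -
    have "\<forall>i\<in>I - {k}. A i \<bullet> (X' ! j - X ! j) = 0"
      using Int tight_col[OF V(1) _ j] tight_col[OF V(2) _ j] by (auto simp: inner_diff_right)
    then have "X' ! j - X ! j = (A k \<bullet> (X' ! j - X ! j)) *\<^sub>R edge_dir X k"
      by (rule eq_edge_dir_if_rows_orthogonal[OF V(1) k(1)])
    also have "A k \<bullet> (X' ! j - X ! j) = \<theta> j"
      using tight_col[OF V(1) k(1) j] by (simp add: \<theta>_def inner_diff_right)
    finally show ?thesis by (metis add.commute diff_add_cancel)
  qed
  have "lex_nonneg (Suc m) \<theta>"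
    unfolding \<theta>_def by (rule lex_slack_nonneg[OF V(2) km])
  moreover have "\<not> (\<forall>j<Suc m. \<theta> j = 0)"
  proof
    assume "\<forall>j<Suc m. \<theta> j = 0"
    then have "X' = X"
      using cols length_cols[OF V(1)] length_cols[OF V(2)] by (intro nth_equalityI) auto
    then show False using basis_unique[OF V(1)] V(2) k by auto
  qed
  ultimately show ?thesis using that cols unfolding lex_nonneg_def by blast
qed

lemma entering_row_decreases:
  assumes V: "(I, X) \<in> V" "(I', X') \<in> V" and l: "l \<in> I'" "l \<notin> I"
    and \<theta>: "lex_pos (Suc m) \<theta>" and cols: "\<And>j. j < Suc m \<Longrightarrow> X' ! j = X ! j + \<theta> j *\<^sub>R d"
  shows "A l \<bullet> d < 0"
proof (rule ccontr)
  assume "\<not> A l \<bullet> d < 0"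
  then have "lex_nonneg (Suc m) (\<lambda>j. (A l \<bullet> d) * \<theta> j)"
    using \<theta> by (intro lex_nonneg_mult) (auto simp: lex_nonneg_def)
  moreover have lm: "l < m" using basis_subset[OF V(2)] l(1) by auto
  let ?s = "\<lambda>j. A l \<bullet> X ! j - btilde_row m b l ! j"
  have "(A l \<bullet> d) * \<theta> j = - ?s j" if "j < Suc m" for j
    using tight_col[OF V(2) l(1) that] cols[OF that] by (simp add: inner_add_right algebra_simps)
  ultimately have "lex_nonneg (Suc m) (\<lambda>j. - ?s j)" by (rule lex_nonneg_cong)
  moreover have "lex_pos (Suc m) ?s"
  proof -
    have "?s (Suc l) = 1" using col_Suc_eq_0[OF V(1) lm l(2)] lm by simp
    then show ?thesis using lex_slack_nonneg[OF V(1) lm] lm unfolding lex_nonneg_def by force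
  qed
  ultimately show False using lex_pos_imp_not_lex_nonneg_uminus by blast
qed

lemma lex_ratio_test:
  assumes V: "(I1, X1) \<in> V" "(I2, X2) \<in> V" and l: "l \<in> I1" "A l \<bullet> d < 0"
    and cols1: "\<And>j. j < Suc m \<Longrightarrow> X1 ! j = X ! j + \<theta>1 j *\<^sub>R d"
    and cols2: "\<And>j. j < Suc m \<Longrightarrow> X2 ! j = X ! j + \<theta>2 j *\<^sub>R d"
  shows "lex_nonneg (Suc m) (\<lambda>j. \<theta>1 j - \<theta>2 j)"
proof -
  have lm: "l < m" using basis_subset[OF V(1)] l(1) by auto
  have "lex_nonneg (Suc m) (\<lambda>j. (- 1 / (A l \<bullet> d)) * (A l \<bullet> X2 ! j - btilde_row m b l ! j))"
    using l(2) lex_slack_nonneg[OF V(2) lm] by (intro lex_nonneg_mult) auto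
  then show ?thesis
  proof (rule lex_nonneg_cong)
    fix j assume j: "j < Suc m"
    have "A l \<bullet> X2 ! j - btilde_row m b l ! j = (A l \<bullet> d) * (\<theta>2 j - \<theta>1 j)"
      using tight_col[OF V(1) l(1) j] cols1[OF j] cols2[OF j]
      by (simp add: inner_add_right algebra_simps)
    then show "(- 1 / (A l \<bullet> d)) * (A l \<bullet> X2 ! j - btilde_row m b l ! j) = \<theta>1 j - \<theta>2 j"
      using l(2) by simp
  qed
qed

lemma tight_set_subset_segment:
  assumes V: "(I, X) \<in> V" and k: "k \<in> I" and l: "l < m" "A l \<bullet> edge_dir X k < 0"
    and t: "t > 0" "A l \<bullet> (X ! 0 + t *\<^sub>R edge_dir X k) = b l"
  shows "{x \<in> P. \<forall>i\<in>I - {k}. A i \<bullet> x = b i} \<subseteq> closed_segment (X ! 0) (X ! 0 + t *\<^sub>R edge_dir X k)"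
proof
  fix x assume x: "x \<in> {x \<in> P. \<forall>i\<in>I - {k}. A i \<bullet> x = b i}"
  let ?v = "X ! 0" and ?d = "edge_dir X k"
  define s where "s = A k \<bullet> (x - ?v)"
  have "\<forall>i\<in>I - {k}. A i \<bullet> (x - ?v) = 0"
    using x tight_col0[OF V] by (simp add: inner_diff_right)
  then have "x - ?v = s *\<^sub>R ?d"
    unfolding s_def by (rule eq_edge_dir_if_rows_orthogonal[OF V k])
  then have xs: "x = ?v + s *\<^sub>R ?d" by (metis add.commute diff_add_cancel)
  have "s \<ge> 0"
    using x k basis_subset[OF V] tight_col0[OF V k]
    by (auto simp: s_def mem_polyh inner_diff_right)
  moreover have "s * (A l \<bullet> ?d) \<ge> t * (A l \<bullet> ?d)"
    using x l(1) t(2) xs by (auto simp: mem_polyh inner_add_right)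
  then have "s \<le> t" using l(2) by simp
  moreover have "x = (1 - s / t) *\<^sub>R ?v + (s / t) *\<^sub>R (?v + t *\<^sub>R ?d)"
    using xs t(1) by (simp add: algebra_simps)
  ultimately show "x \<in> closed_segment ?v (?v + t *\<^sub>R ?d)"
    unfolding closed_segment_def using t(1) by (auto intro!: exI[of _ "s / t"])
qed

end

section \<open>Graphs of lexicographically feasible bases\<close>

locale lex_basis_graph = lex_feasible_bases m A b V
  for m :: nat and A :: "nat \<Rightarrow> real^'n::finite" and b V +
  fixes E :: "((nat set \<times> (real^'n) list) \<times> (nat set \<times> (real^'n) list)) set"
  assumes graph: "fin_undirected_graph V E"
    and nonempty: "V \<noteq> {}"
    and degree: "(I, X) \<in> V \<Longrightarrow> card {u'. ((I, X), u') \<in> E} = CARD('n)"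
    and neighbour_exchange: "((I, X), (I', X')) \<in> E \<Longrightarrow> card (I \<inter> I') = CARD('n) - 1"
begin

lemma finite_nodes: "finite V"
  using graph by (simp add: fin_undirected_graph_def)

lemma edge_nodes: "((I, X), (I', X')) \<in> E \<Longrightarrow> (I, X) \<in> V \<and> (I', X') \<in> V"
  using graph by (auto simp: fin_undirected_graph_def)

lemma ex_leaving:
  assumes e: "((I, X), (I', X')) \<in> E"
  shows "\<exists>k\<in>I. k \<notin> I'"
proof (rule ccontr)
  assume "\<not> ?thesis"
  then have "I \<inter> I' = I" by blast
  moreover have "CARD('n) > 0" by simp
  ultimately show False
    using neighbour_exchange[OF e] card_basis edge_nodes[OF e]
    by (metis diff_less less_irrefl zero_less_one)
qed

lemma neighbour_unique_by_leaving:
  assumes e: "((I, X), (I1, X1)) \<in> E" "((I, X), (I2, X2)) \<in> E"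
    and k: "k \<in> I" "k \<notin> I1" "k \<notin> I2"
  shows "(I1, X1) = (I2, X2)"
proof -
  have V: "(I, X) \<in> V" "(I1, X1) \<in> V" "(I2, X2) \<in> V" using edge_nodes e by auto
  obtain \<theta>1 where \<theta>1: "lex_pos (Suc m) \<theta>1"
      and cols1: "\<And>j. j < Suc m \<Longrightarrow> X1 ! j = X ! j + \<theta>1 j *\<^sub>R edge_dir X k"
    using pivot_step_lex_pos[OF V(1,2) k(1,2) exchange_Int_eq[OF V(1) k(1,2) neighbour_exchange[OF e(1)]]]
    by blast
  obtain \<theta>2 where \<theta>2: "lex_pos (Suc m) \<theta>2"
      and cols2: "\<And>j. j < Suc m \<Longrightarrow> X2 ! j = X ! j + \<theta>2 j *\<^sub>R edge_dir X k"
    using pivot_step_lex_pos[OF V(1,3) k(1,3) exchange_Int_eq[OF V(1) k(1,3) neighbour_exchange[OF e(2)]]]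
    by blast
  obtain l1 where l1: "l1 \<in> I1" "l1 \<notin> I" using ex_entering[OF V(1,2) neighbour_exchange[OF e(1)]] by blast
  obtain l2 where l2: "l2 \<in> I2" "l2 \<notin> I" using ex_entering[OF V(1,3) neighbour_exchange[OF e(2)]] by blast
  \<comment> \<open>each step is blocked by the entering constraint of its own neighbour\<close>
  have "lex_nonneg (Suc m) (\<lambda>j. \<theta>1 j - \<theta>2 j)"
    using lex_ratio_test[OF V(2,3) l1(1) entering_row_decreases[OF V(1,2) l1 \<theta>1 cols1] cols1 cols2] .
  moreover have "lex_nonneg (Suc m) (\<lambda>j. - (\<theta>1 j - \<theta>2 j))"
    using lex_ratio_test[OF V(3,2) l2(1) entering_row_decreases[OF V(1,3) l2 \<theta>2 cols2] cols2 cols1]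
    by simp
  ultimately have "\<forall>j<Suc m. \<theta>1 j = \<theta>2 j" using lex_nonneg_antisym by fastforce
  then have "X1 = X2"
    using cols1 cols2 length_cols[OF V(2)] length_cols[OF V(3)] by (intro nth_equalityI) auto
  then show ?thesis using basis_unique[OF V(2)] V(3) by simp
qed

lemma ex_neighbour_leaving:
  assumes V: "(I, X) \<in> V" and k: "k \<in> I"
  shows "\<exists>I' X'. ((I, X), (I', X')) \<in> E \<and> k \<notin> I'"
proof -
  define N where "N = {u'. ((I, X), u') \<in> E}"
  define leaving where "leaving u' = (SOME k. k \<in> I \<and> k \<notin> fst u')"
    for u' :: "nat set \<times> (real^'n) list"
  have leaving: "leaving u' \<in> I \<and> leaving u' \<notin> fst u'" if "u' \<in> N" for u'
    using that ex_leaving someI_ex[of "\<lambda>k. k \<in> I \<and> k \<notin> fst u'"]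
    unfolding N_def leaving_def by (cases u') fastforce
  have "inj_on leaving N"
  proof (rule inj_onI)
    fix u1 u2 assume "u1 \<in> N" "u2 \<in> N" "leaving u1 = leaving u2"
    then show "u1 = u2"
      using leaving neighbour_unique_by_leaving unfolding N_def
      by (cases u1, cases u2) (metis fst_conv mem_Collect_eq)
  qed
  then have "card (leaving ` N) = card I"
    using card_image degree[OF V] card_basis[OF V] unfolding N_def by metis
  moreover have "leaving ` N \<subseteq> I" using leaving by blast
  ultimately have "leaving ` N = I" using card_subset_eq finite_basis[OF V] by blast
  then obtain u' where "u' \<in> N" "leaving u' = k" using k by blast
  then show ?thesis using leaving unfolding N_def by (cases u') auto
qed

lemma ex_pivot:
  assumes V: "(I, X) \<in> V" and k: "k \<in> I"
  obtains I' X' \<theta> where "((I, X), (I', X')) \<in> E" "lex_pos (Suc m) \<theta>"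
    "\<And>j. j < Suc m \<Longrightarrow> X' ! j = X ! j + \<theta> j *\<^sub>R edge_dir X k"
proof -
  obtain I' X' where e: "((I, X), (I', X')) \<in> E" and k': "k \<notin> I'"
    using ex_neighbour_leaving[OF V k] by blast
  have V': "(I', X') \<in> V" using edge_nodes[OF e] by simp
  show ?thesis
    using pivot_step_lex_pos[OF V V' k k' exchange_Int_eq[OF V k k' neighbour_exchange[OF e]]] that e
    by blast
qed

lemma vertex_is_col0:
  assumes "v \<in> poly_vertices P"
  obtains I X where "(I, X) \<in> V" "X ! 0 = v"
proof -
  obtain c where c: "{v} = {x \<in> P. \<forall>y\<in>P. c \<bullet> x \<le> c \<bullet> y}"
    using vertex_unique_minimizer[OF assms] by blast
  obtain u where "u \<in> V" and min: "\<forall>u'\<in>V. lex_nonneg (Suc m) (\<lambda>j. c \<bullet> snd u' ! j - c \<bullet> snd u ! j)"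
    using ex_lex_min[OF finite_nodes nonempty, of "Suc m" "\<lambda>u j. c \<bullet> snd u ! j"] by blast
  then obtain I X where V: "(I, X) \<in> V" and u: "u = (I, X)" by (cases u) auto
  have "c \<bullet> edge_dir X k \<ge> 0" if k: "k \<in> I" for k
  proof (rule ccontr)
    assume "\<not> c \<bullet> edge_dir X k \<ge> 0"
    then have neg: "c \<bullet> edge_dir X k < 0" by simp
    obtain I' X' \<theta> where e: "((I, X), (I', X')) \<in> E" and \<theta>: "lex_pos (Suc m) \<theta>"
        and cols: "\<And>j. j < Suc m \<Longrightarrow> X' ! j = X ! j + \<theta> j *\<^sub>R edge_dir X k"
      using ex_pivot[OF V k] by blast
    have "lex_nonneg (Suc m) (\<lambda>j. c \<bullet> X' ! j - c \<bullet> X ! j)"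
      using min edge_nodes[OF e] u by fastforce
    then show False using lex_decrease_along_dir[OF \<theta> neg cols] by blast
  qed
  then have "\<forall>y\<in>P. c \<bullet> X ! 0 \<le> c \<bullet> y" using col0_minimizes[OF V] by blast
  then have "X ! 0 = v" using c col0_in_polyh[OF V] by blast
  with V show thesis by (rule that)
qed

lemma edge_imp_adjacent:
  assumes e: "((I, X), (I', X')) \<in> E" and ne: "X ! 0 \<noteq> X' ! 0"
  shows "poly_adjacent P (X ! 0) (X' ! 0)"
proof -
  have V: "(I, X) \<in> V" "(I', X') \<in> V" using edge_nodes[OF e] by auto
  obtain k where k: "k \<in> I" "k \<notin> I'" using ex_leaving[OF e] by blast
  have Int: "I \<inter> I' = I - {k}" by (rule exchange_Int_eq[OF V(1) k neighbour_exchange[OF e]])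
  obtain \<theta> where \<theta>: "lex_pos (Suc m) \<theta>"
      and cols: "\<And>j. j < Suc m \<Longrightarrow> X' ! j = X ! j + \<theta> j *\<^sub>R edge_dir X k"
    using pivot_step_lex_pos[OF V k Int] by blast
  obtain l where l: "l \<in> I'" "l \<notin> I" using ex_entering[OF V neighbour_exchange[OF e]] by blast
  have dir: "A l \<bullet> edge_dir X k < 0" by (rule entering_row_decreases[OF V l \<theta> cols])
  have w: "X' ! 0 = X ! 0 + \<theta> 0 *\<^sub>R edge_dir X k" using cols[of 0] by simp
  have "\<theta> 0 > 0" using lex_pos_first_nonneg[OF \<theta>] ne w by (cases "\<theta> 0 = 0") auto
  let ?T = "{x \<in> P. \<forall>i\<in>I \<inter> I'. A i \<bullet> x = b i}"
  have "?T \<subseteq> closed_segment (X ! 0) (X' ! 0)"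
    unfolding Int w
    using tight_set_subset_segment[OF V(1) k(1) _ dir \<open>\<theta> 0 > 0\<close>] basis_subset[OF V(2)] l(1)
      tight_col0[OF V(2) l(1)] w by auto
  moreover have "closed_segment (X ! 0) (X' ! 0) \<subseteq> ?T"
    using col0_in_polyh[OF V(1)] col0_in_polyh[OF V(2)] tight_col0[OF V(1)] tight_col0[OF V(2)]
    by (intro closed_segment_subset convex_tight_set) auto
  moreover have "is_face P ?T"
    using finite_basis[OF V(1)] basis_subset[OF V(1)] col0_in_polyh[OF V(1)] tight_col0[OF V(1)]
    by (intro is_face_tight_set) auto
  ultimately show ?thesis
    unfolding poly_adjacent_def using col0_is_vertex V aff_dim_closed_segment[OF ne] by auto
qed

lemma reduced_costs_nonneg_at_fibre_lex_min:
  assumes V: "(I, X) \<in> V" and k: "k \<in> I" and vmin: "\<forall>y\<in>P. c \<bullet> X ! 0 \<le> c \<bullet> y"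
    and lexmin: "\<And>I' X'. (I', X') \<in> V \<Longrightarrow> X' ! 0 = X ! 0 \<Longrightarrow>
        lex_nonneg (Suc m) (\<lambda>j. c \<bullet> X' ! j - c \<bullet> X ! j)"
  shows "c \<bullet> edge_dir X k \<ge> 0"
proof (rule ccontr)
  assume neg: "\<not> c \<bullet> edge_dir X k \<ge> 0"
  obtain I' X' \<theta> where e: "((I, X), (I', X')) \<in> E" and \<theta>: "lex_pos (Suc m) \<theta>"
      and cols: "\<And>j. j < Suc m \<Longrightarrow> X' ! j = X ! j + \<theta> j *\<^sub>R edge_dir X k"
    using ex_pivot[OF V k] by blast
  have V': "(I', X') \<in> V" using edge_nodes[OF e] by simp
  have x0: "X' ! 0 = X ! 0 + \<theta> 0 *\<^sub>R edge_dir X k" using cols[of 0] by simp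
  have "c \<bullet> X ! 0 \<le> c \<bullet> X' ! 0" using vmin col0_in_polyh[OF V'] by blast
  then have "0 \<le> \<theta> 0 * (c \<bullet> edge_dir X k)" using x0 by (simp add: inner_add_right)
  then have "\<theta> 0 = 0" using neg lex_pos_first_nonneg[OF \<theta>] by (simp add: zero_le_mult_iff)
  then have "X' ! 0 = X ! 0" using x0 by simp
  then show False using lexmin[OF V'] lex_decrease_along_dir[OF \<theta> _ cols] neg by simp
qed

lemma tie_breaking_pivot_moves:
  assumes V: "(I, X) \<in> V" and k: "k \<in> I" "c \<bullet> edge_dir X k = 0" "c' \<bullet> edge_dir X k < 0"
    and lexmin: "\<And>I' X'. (I', X') \<in> V \<Longrightarrow> X' ! 0 = X ! 0 \<Longrightarrow>
        (\<forall>j<Suc m. c \<bullet> X' ! j = c \<bullet> X ! j) \<Longrightarrow> lex_nonneg (Suc m) (\<lambda>j. c' \<bullet> X' ! j - c' \<bullet> X ! j)"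
  obtains I' X' where "((I, X), (I', X')) \<in> E" "X' ! 0 \<noteq> X ! 0" "c \<bullet> X' ! 0 = c \<bullet> X ! 0"
proof -
  obtain I' X' \<theta> where e: "((I, X), (I', X')) \<in> E" and \<theta>: "lex_pos (Suc m) \<theta>"
      and cols: "\<And>j. j < Suc m \<Longrightarrow> X' ! j = X ! j + \<theta> j *\<^sub>R edge_dir X k"
    using ex_pivot[OF V k(1)] by blast
  have V': "(I', X') \<in> V" using edge_nodes[OF e] by simp
  have c: "\<forall>j<Suc m. c \<bullet> X' ! j = c \<bullet> X ! j" using cols k(2) by (simp add: inner_add_right)
  then have "X' ! 0 \<noteq> X ! 0"
    using lexmin[OF V'] lex_decrease_along_dir[OF \<theta> k(3) cols] by blast
  then show thesis using that e c by blast
qed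

lemma ex_fibre_lex_min:
  assumes "(I0, X0) \<in> V"
  obtains I X where "(I, X) \<in> V" "X ! 0 = X0 ! 0"
    "\<And>I' X'. (I', X') \<in> V \<Longrightarrow> X' ! 0 = X ! 0 \<Longrightarrow>
        lex_nonneg (Suc m) (\<lambda>j. c \<bullet> X' ! j - c \<bullet> X ! j)"
    "\<And>I' X'. (I', X') \<in> V \<Longrightarrow> X' ! 0 = X ! 0 \<Longrightarrow> (\<forall>j<Suc m. c \<bullet> X' ! j = c \<bullet> X ! j) \<Longrightarrow>
        lex_nonneg (Suc m) (\<lambda>j. c' \<bullet> X' ! j - c' \<bullet> X ! j)"
proof -
  define S where "S = {u \<in> V. snd u ! 0 = X0 ! 0}"
  define S1 where "S1 = {u \<in> S. \<forall>u'\<in>S. lex_nonneg (Suc m) (\<lambda>j. c \<bullet> snd u' ! j - c \<bullet> snd u ! j)}"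
  have S: "finite S" "S \<noteq> {}" using finite_nodes assms unfolding S_def by auto
  have "\<exists>u1\<in>S. \<forall>u'\<in>S. lex_nonneg (Suc m) (\<lambda>j. c \<bullet> snd u' ! j - c \<bullet> snd u1 ! j)"
    using ex_lex_min[OF S, of "Suc m" "\<lambda>u j. c \<bullet> snd u ! j"] by blast
  then have S1: "finite S1" "S1 \<noteq> {}" using S(1) unfolding S1_def by (simp, blast)
  obtain u where "u \<in> S1" and min': "\<forall>u'\<in>S1. lex_nonneg (Suc m) (\<lambda>j. c' \<bullet> snd u' ! j - c' \<bullet> snd u ! j)"
    using ex_lex_min[OF S1, of "Suc m" "\<lambda>u j. c' \<bullet> snd u ! j"] by blast
  obtain I X where u: "u = (I, X)" by (cases u)
  have V: "(I, X) \<in> V" "X ! 0 = X0 ! 0"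
    and min: "\<forall>u'\<in>S. lex_nonneg (Suc m) (\<lambda>j. c \<bullet> snd u' ! j - c \<bullet> X ! j)"
    using \<open>u \<in> S1\<close> unfolding u S1_def S_def by auto
  show ?thesis
  proof (rule that[OF V])
    show "lex_nonneg (Suc m) (\<lambda>j. c \<bullet> X' ! j - c \<bullet> X ! j)"
      if "(I', X') \<in> V" "X' ! 0 = X ! 0" for I' X'
      using min that V(2) unfolding S_def by auto
    show "lex_nonneg (Suc m) (\<lambda>j. c' \<bullet> X' ! j - c' \<bullet> X ! j)"
      if V': "(I', X') \<in> V" "X' ! 0 = X ! 0" and eq: "\<forall>j<Suc m. c \<bullet> X' ! j = c \<bullet> X ! j" for I' X'
    proof -
      have "lex_nonneg (Suc m) (\<lambda>j. c \<bullet> snd u' ! j - c \<bullet> X' ! j)" if "u' \<in> S" for u'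
        using min that by (auto intro: lex_nonneg_cong simp: eq)
      then have "(I', X') \<in> S1" using V' V(2) unfolding S1_def S_def by auto
      then show ?thesis using min' unfolding u by auto
    qed
  qed
qed

lemma adjacent_imp_edge:
  assumes adj: "poly_adjacent P v w"
  obtains I X I' X' where "((I, X), (I', X')) \<in> E" "X ! 0 = v" "X' ! 0 = w"
proof -
  have vert: "v \<in> poly_vertices P" "w \<in> poly_vertices P" and "v \<noteq> w"
    using adj unfolding poly_adjacent_def by auto
  obtain c where seg: "closed_segment v w = {x \<in> P. \<forall>y\<in>P. c \<bullet> x \<le> c \<bullet> y}"
    and v: "v \<in> P" "\<forall>y\<in>P. c \<bullet> v \<le> c \<bullet> y" and w: "w \<in> P" and cw: "c \<bullet> w = c \<bullet> v"
    by (rule adjacent_segment_minimizers[OF adj])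
  obtain c' where c': "c' \<bullet> w < c' \<bullet> v"
    using vertex_strictly_separates[OF vert(2) v(1) \<open>v \<noteq> w\<close>] by blast
  obtain I0 X0 where "(I0, X0) \<in> V" "X0 ! 0 = v" by (rule vertex_is_col0[OF vert(1)])
  obtain I X where V: "(I, X) \<in> V" and "X ! 0 = X0 ! 0"
    and cmin: "\<And>I' X'. (I', X') \<in> V \<Longrightarrow> X' ! 0 = X ! 0 \<Longrightarrow>
        lex_nonneg (Suc m) (\<lambda>j. c \<bullet> X' ! j - c \<bullet> X ! j)"
    and c'min: "\<And>I' X'. (I', X') \<in> V \<Longrightarrow> X' ! 0 = X ! 0 \<Longrightarrow> (\<forall>j<Suc m. c \<bullet> X' ! j = c \<bullet> X ! j) \<Longrightarrow>
        lex_nonneg (Suc m) (\<lambda>j. c' \<bullet> X' ! j - c' \<bullet> X ! j)"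
    using ex_fibre_lex_min[OF \<open>(I0, X0) \<in> V\<close>, of c c'] by blast
  with \<open>X0 ! 0 = v\<close> have X0: "X ! 0 = v" by simp
  have "\<forall>k\<in>I. c \<bullet> edge_dir X k \<ge> 0"
  proof
    fix k assume "k \<in> I"
    show "c \<bullet> edge_dir X k \<ge> 0"
      by (rule reduced_costs_nonneg_at_fibre_lex_min[OF V \<open>k \<in> I\<close> _ cmin]) (use v(2) X0 in simp)
  qed
  then obtain k where k: "k \<in> I" "c \<bullet> edge_dir X k = 0" "c' \<bullet> edge_dir X k < 0"
    using ex_tied_reduced_cost[OF V _ w(1)] cw c' unfolding X0 by blast
  obtain I' X' where e: "((I, X), (I', X')) \<in> E" and "X' ! 0 \<noteq> X ! 0" "c \<bullet> X' ! 0 = c \<bullet> X ! 0"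
    by (rule tie_breaking_pivot_moves[OF V k c'min])
  moreover have V': "(I', X') \<in> V" using edge_nodes[OF e] by simp
  ultimately have "X' ! 0 \<in> closed_segment v w" using seg v(2) col0_in_polyh[OF V'] X0 by simp
  then have "X' ! 0 = w"
    using vertex_in_closed_segment[OF col0_is_vertex[OF V'] v(1) w(1)] \<open>X' ! 0 \<noteq> X ! 0\<close> X0 by auto
  with e X0 show thesis by (rule that)
qed

lemma poly_vertices_eq: "poly_vertices P = (\<lambda>(I, X). X ! 0) ` V"
proof
  show "poly_vertices P \<subseteq> (\<lambda>(I, X). X ! 0) ` V"
  proof
    fix v assume "v \<in> poly_vertices P"
    then obtain I X where "(I, X) \<in> V" "X ! 0 = v" by (rule vertex_is_col0)
    then show "v \<in> (\<lambda>(I, X). X ! 0) ` V" by force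
  qed
  show "(\<lambda>(I, X). X ! 0) ` V \<subseteq> poly_vertices P" using col0_is_vertex by auto
qed

lemma poly_adjacent_iff:
  "poly_adjacent P v w \<longleftrightarrow> v \<noteq> w \<and> (\<exists>I X I' X'. ((I, X), (I', X')) \<in> E \<and> X ! 0 = v \<and> X' ! 0 = w)"
proof
  assume adj: "poly_adjacent P v w"
  then have "v \<noteq> w" unfolding poly_adjacent_def by auto
  moreover obtain I X I' X' where "((I, X), (I', X')) \<in> E" "X ! 0 = v" "X' ! 0 = w"
    by (rule adjacent_imp_edge[OF adj])
  ultimately show "v \<noteq> w \<and> (\<exists>I X I' X'. ((I, X), (I', X')) \<in> E \<and> X ! 0 = v \<and> X' ! 0 = w)"
    by blast
next
  assume "v \<noteq> w \<and> (\<exists>I X I' X'. ((I, X), (I', X')) \<in> E \<and> X ! 0 = v \<and> X' ! 0 = w)"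
  then show "poly_adjacent P v w" using edge_imp_adjacent by blast
qed

end

theorem mainTheorem7:
  fixes m :: nat and A :: "nat \<Rightarrow> real^'n" and b :: "nat \<Rightarrow> real"
    and V :: "(nat set \<times> (real^'n) list) set" and E
  assumes poly: "polytope (polyh m A b)"
    and graph: "fin_undirected_graph V E"
    and nonempty: "V \<noteq> {}"
    and vert: "\<And>I X. (I, X) \<in> V \<Longrightarrow>
        I \<subseteq> {..<m} \<and> length X = Suc m \<and>
        card I = CARD('n) \<and>
        (\<forall>i\<in>I. AX_row A X i = btilde_row m b i) \<and>
        (\<forall>i<m. lex_le (btilde_row m b i) (AX_row A X i)) \<and>
        card {u'. ((I, X), u') \<in> E} = CARD('n) \<and>
        (\<forall>I' X'. ((I, X), (I', X')) \<in> E \<longrightarrow> card (I \<inter> I') = CARD('n) - 1)"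
  shows "G_vert (polyh m A b) = graph_image (\<lambda>(I, X). X ! 0) V E"
proof -
  interpret lex_basis_graph m A b V E
    using graph nonempty vert by unfold_locales (auto simp: fin_undirected_graph_def)
  have "{(v, w). poly_adjacent (polyh m A b) v w} =
      {((\<lambda>(I, X). X ! 0) u, (\<lambda>(I, X). X ! 0) u') | u u'.
        (u, u') \<in> E \<and> (\<lambda>(I, X). X ! 0) u \<noteq> (\<lambda>(I, X). X ! 0) u'}"
    unfolding poly_adjacent_iff by fastforce
  then show ?thesis unfolding G_vert_def graph_image_def poly_vertices_eq by simp
qed

end
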